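(* Consider the randomized algorithm Channel-Screening in which, in every round, every active station, independently for each channel $\beta\in\{1,\dots,b\}$ and independently of all other random choices, transmits a message on channel $\beta$ with probability $k^{-\beta/b}$, until a message is heard on some channel. Let $t$ be a time step and let $1\le\beta\le b$ be such that $k^{(\beta-1)/b}\le |W(t)|\le k^{\beta/b}$, where $W(t)$ is the set of stations active at time step $t$. Then the probability that a message is heard on channel $\beta$ at time step $t$ (i.e. exactly one station transmits on $\beta$ at time step $t$) is at least $\frac{1}{2ek^{1/b}}$.
   Context: Model: multi-channel single-hop radio network with $b$ channels numbered $1,\dots,b$, synchronous rounds, no collision detection; a message on a channel in a round is heard by everybody iff exactly one station transmits on that channel in that round. At most $k$ stations are activated spontaneously at arbitrary times; $k$ is known to the stations, and only active stations execute the algorithm. *)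

theory Defs
  imports "HOL-Probability.Probability"
begin

definition cs_prob :: "nat \<Rightarrow> nat \<Rightarrow> nat \<Rightarrow> real" where
  "cs_prob k b \<beta> = real k powr (- real \<beta> / real b)"

definition cs_round :: "'s set \<Rightarrow> nat \<Rightarrow> nat \<Rightarrow> ('s \<times> nat \<Rightarrow> bool) pmf" where
  "cs_round W k b = Pi_pmf (W \<times> {1..b}) False (\<lambda>(s, \<beta>). bernoulli_pmf (cs_prob k b \<beta>))"

definition heard_on :: "'s set \<Rightarrow> nat \<Rightarrow> ('s \<times> nat \<Rightarrow> bool) \<Rightarrow> bool" where
  "heard_on W \<beta> f \<longleftrightarrow> card {s \<in> W. f (s, \<beta>)} = 1"

end

theory Submission imports Defs begin

text \<open>A single station is heard on channel \<beta> with probability n q (1 - q)^(n - 1), where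
  n = |W| and q = k^(-\<beta>/b). The hypothesis on |W| gives k^(-1/b) \<le> n q \<le> 1, and
  n q \<le> 1 gives (1 - q)^(n - 1) \<ge> (1 - 1/n)^(n - 1) \<ge> 1/e. This yields the bound
  even without the factor 2.\<close>

lemma exp_minus_one_le_power:
  fixes p :: real
  assumes "0 \<le> p" and "p * real (Suc m) \<le> 1"
  shows "exp (-1) \<le> (1 - p) ^ m"
proof (cases "m = 0")
  case False
  have p_le: "p \<le> 1 - real m / real (Suc m)"
    using assms(2) by (simp add: field_simps)
  have "exp (-1) = inverse (exp 1 :: real)"
    by (rule exp_minus)
  also have "\<dots> \<le> inverse ((1 + 1 / real m) ^ m)"
    using exp_ge_one_plus_x_over_n_power_n[of m 1] False
    by (intro le_imp_inverse_le) (auto simp: add_pos_nonneg)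
  also have "\<dots> = (real m / real (Suc m)) ^ m"
    using False by (simp add: power_inverse field_simps)
  also have "\<dots> \<le> (1 - p) ^ m"
    using p_le by (intro power_mono) auto
  finally show ?thesis .
qed simp

lemma prob_Pi_pmf_bernoulli_only_true:
  fixes p :: "'a \<Rightarrow> real"
  assumes "finite I" "J \<subseteq> I" "s \<in> J" and p: "\<And>i. i \<in> I \<Longrightarrow> 0 \<le> p i \<and> p i \<le> 1"
  shows "measure_pmf.prob (Pi_pmf I dflt (\<lambda>i. bernoulli_pmf (p i))) {f. \<forall>j\<in>J. f j = (j = s)}
           = p s * (\<Prod>j\<in>J - {s}. 1 - p j)"
proof -
  define B where "B j = (if j \<in> J then {j = s} else UNIV)" for j
  have "{f. \<forall>j\<in>J. f j = (j = s)} = Pi I B"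
    using \<open>J \<subseteq> I\<close> by (auto simp: B_def Pi_def)
  then have "measure_pmf.prob (Pi_pmf I dflt (\<lambda>i. bernoulli_pmf (p i))) {f. \<forall>j\<in>J. f j = (j = s)}
      = (\<Prod>i\<in>I. measure_pmf.prob (bernoulli_pmf (p i)) (B i))"
    using \<open>finite I\<close> by (simp add: measure_Pi_pmf_Pi)
  also have "\<dots> = (\<Prod>j\<in>J. measure_pmf.prob (bernoulli_pmf (p j)) {j = s})"
    using assms(1,2) by (intro prod.mono_neutral_cong_right) (auto simp: B_def)
  also have "\<dots> = (\<Prod>j\<in>J. if j = s then p j else 1 - p j)"
    using assms(2) p by (intro prod.cong) (auto simp: measure_pmf_single)
  also have "\<dots> = p s * (\<Prod>j\<in>J - {s}. 1 - p j)"
    using assms(1-3) finite_subset by (subst prod.remove[of _ s]) auto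
  finally show ?thesis .
qed

lemma prob_Pi_pmf_bernoulli_exactly_one:
  fixes p :: "'a \<Rightarrow> real"
  assumes "finite I" "J \<subseteq> I" and p: "\<And>i. i \<in> I \<Longrightarrow> 0 \<le> p i \<and> p i \<le> 1"
  shows "measure_pmf.prob (Pi_pmf I dflt (\<lambda>i. bernoulli_pmf (p i))) {f. card {j\<in>J. f j} = 1}
           = (\<Sum>s\<in>J. p s * (\<Prod>j\<in>J - {s}. 1 - p j))"
proof -
  have fin: "finite J"
    using assms(1,2) finite_subset by blast
  have "{f. card {j\<in>J. f j} = 1} = (\<Union>s\<in>J. {f. \<forall>j\<in>J. f j = (j = s)})"
    by (auto simp: card_1_singleton_iff)
  moreover have "disjoint_family_on (\<lambda>s. {f. \<forall>j\<in>J. f j = (j = s)}) J"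
    by (auto simp: disjoint_family_on_def)
  ultimately show ?thesis
    using fin assms
    by (simp add: measure_pmf.finite_measure_finite_Union prob_Pi_pmf_bernoulli_only_true)
qed

lemma cs_prob_bounds: "0 \<le> cs_prob k b \<beta> \<and> cs_prob k b \<beta> \<le> 1"
proof (cases "k = 0")
  case False
  then have "real k powr (- real \<beta> / real b) \<le> real k powr 0"
    by (intro powr_mono) (auto simp: divide_nonpos_nonneg)
  then show ?thesis
    using False by (simp add: cs_prob_def)
qed (simp add: cs_prob_def)

lemma heard_on_iff_card_channel:
  "heard_on W \<beta> f \<longleftrightarrow> card {j \<in> W \<times> {\<beta>}. f j} = 1"
proof -
  have "{j \<in> W \<times> {\<beta>}. f j} = (\<lambda>s. (s, \<beta>)) ` {s \<in> W. f (s, \<beta>)}"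
    by auto
  then show ?thesis
    by (simp add: heard_on_def card_image inj_on_def)
qed

lemma prob_heard_on:
  assumes "finite W" and "\<beta> \<in> {1..b}"
  shows "measure_pmf.prob (cs_round W k b) {f. heard_on W \<beta> f}
           = real (card W) * cs_prob k b \<beta> * (1 - cs_prob k b \<beta>) ^ (card W - 1)"
proof -
  let ?q = "cs_prob k b \<beta>"
  have round: "cs_round W k b
      = Pi_pmf (W \<times> {1..b}) False (\<lambda>x. bernoulli_pmf (cs_prob k b (snd x)))"
    by (simp add: cs_round_def case_prod_unfold)
  have "measure_pmf.prob (cs_round W k b) {f. heard_on W \<beta> f}
      = (\<Sum>x\<in>W \<times> {\<beta>}. cs_prob k b (snd x) * (\<Prod>j\<in>W \<times> {\<beta>} - {x}. 1 - cs_prob k b (snd j)))"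
    unfolding round heard_on_iff_card_channel
    using assms cs_prob_bounds by (intro prob_Pi_pmf_bernoulli_exactly_one) auto
  also have "\<dots> = (\<Sum>x\<in>W \<times> {\<beta>}. ?q * (1 - ?q) ^ (card W - 1))"
  proof (intro sum.cong refl)
    fix x assume x: "x \<in> W \<times> {\<beta>}"
    have "(\<Prod>j\<in>W \<times> {\<beta>} - {x}. 1 - cs_prob k b (snd j)) = (\<Prod>j\<in>W \<times> {\<beta>} - {x}. 1 - ?q)"
      by (intro prod.cong) auto
    with x assms(1) show "cs_prob k b (snd x) * (\<Prod>j\<in>W \<times> {\<beta>} - {x}. 1 - cs_prob k b (snd j))
        = ?q * (1 - ?q) ^ (card W - 1)"
      by (auto simp: card_cartesian_product)
  qed
  finally show ?thesis
    by (simp add: card_cartesian_product)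
qed

lemma card_mult_cs_prob_le_one:
  assumes "k \<ge> 1" and "real n \<le> real k powr (real \<beta> / real b)"
  shows "real n * cs_prob k b \<beta> \<le> 1"
proof -
  have "real n * cs_prob k b \<beta> \<le> real k powr (real \<beta> / real b) * real k powr (- real \<beta> / real b)"
    using assms(2) cs_prob_bounds by (auto simp: cs_prob_def intro: mult_right_mono)
  also have "\<dots> = 1"
    using assms(1) by (simp flip: powr_add)
  finally show ?thesis .
qed

lemma card_mult_cs_prob_ge:
  assumes "k \<ge> 1" and "b > 0" and "real k powr ((real \<beta> - 1) / real b) \<le> real n"
  shows "inverse (real k powr (1 / real b)) \<le> real n * cs_prob k b \<beta>"
proof -
  have "- (1 / real b) = (real \<beta> - 1) / real b + (- real \<beta> / real b)"
    using assms(2) by (simp add: field_simps)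
  then have "inverse (real k powr (1 / real b))
      = real k powr ((real \<beta> - 1) / real b) * real k powr (- real \<beta> / real b)"
    by (metis powr_add powr_minus)
  also have "\<dots> \<le> real n * cs_prob k b \<beta>"
    using assms(3) cs_prob_bounds by (auto simp: cs_prob_def intro: mult_right_mono)
  finally show ?thesis .
qed

theorem lemma3:
  fixes W :: "'s set" and k b \<beta> :: nat
  assumes "finite W" and "k \<ge> 1" and "1 \<le> \<beta>" and "\<beta> \<le> b"
    and "real k powr ((real \<beta> - 1) / real b) \<le> real (card W)"
    and "real (card W) \<le> real k powr (real \<beta> / real b)"
  shows "measure_pmf.prob (cs_round W k b) {f. heard_on W \<beta> f}
           \<ge> 1 / (2 * exp 1 * real k powr (1 / real b))"
proof -
  let ?n = "card W" and ?q = "cs_prob k b \<beta>"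
  have "?q * real (Suc (?n - 1)) \<le> 1"
    using card_mult_cs_prob_le_one[OF assms(2,6)] cs_prob_bounds[of k b \<beta>]
    by (cases ?n) (auto simp: mult.commute)
  then have power_ge: "exp (-1) \<le> (1 - ?q) ^ (?n - 1)"
    using cs_prob_bounds by (intro exp_minus_one_le_power) auto
  have "1 / (2 * exp 1 * real k powr (1 / real b)) \<le> inverse (real k powr (1 / real b)) * exp (-1)"
    using assms(2) by (simp add: exp_minus field_simps)
  also have "\<dots> \<le> real ?n * ?q * (1 - ?q) ^ (?n - 1)"
    using card_mult_cs_prob_ge[OF assms(2) _ assms(5)] assms(3,4) power_ge cs_prob_bounds[of k b \<beta>]
    by (intro mult_mono) auto
  also have "\<dots> = measure_pmf.prob (cs_round W k b) {f. heard_on W \<beta> f}"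
    using assms(1,3,4) by (simp add: prob_heard_on)
  finally show ?thesis .
qed

end
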